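(* Let $X$ be a real reflexive Banach space and let $\varepsilon\in[0,2)$. Then $X$ is $\varepsilon$-smooth if and only if $\mathcal{S}(X^* )\le\varepsilon$.
   Context: For a normed space $Z$ and $z\in Z\setminus\{\theta\}$, $J(z)=\{\phi\in S_{Z^*}:\phi(z)=\|z\|\}$, where $S_{Z^*}$ is the unit sphere of the dual. A point $z$ is $\varepsilon$-smooth if $\operatorname{diam}J(z)\le\varepsilon$ ($\operatorname{diam}A=\sup_{a,b\in A}\|a-b\|$); the space $Z$ is $\varepsilon$-smooth if every $z\in S_Z$ is $\varepsilon$-smooth. For a normed space $W$, $\mathcal{S}(W)=\sup\{\operatorname{diam}(H\cap S_W): H \text{ a supporting hyperplane of } B_W\}$, where a supporting hyperplane of $B_W$ is a set $\{w\in W:\phi(w)=1\}$ with $\phi\in S_{W^*}$; equivalently $\mathcal{S}(W)=\sup\{\operatorname{diam}\{w\in S_W:\phi(w)=1\}:\phi\in S_{W^*}\}$. Here it is applied with $W=X^*$. *)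

theory Defs
  imports "HOL-Analysis.Analysis"
begin

definition duality_set :: "'a::real_normed_vector \<Rightarrow> ('a \<Rightarrow>\<^sub>L real) set" where
  "duality_set z = {\<phi>. norm \<phi> = 1 \<and> blinfun_apply \<phi> z = norm z}"

definition eps_smooth_point :: "real \<Rightarrow> 'a::real_normed_vector \<Rightarrow> bool" where
  "eps_smooth_point \<epsilon> z \<longleftrightarrow> diameter (duality_set z) \<le> \<epsilon>"

definition eps_smooth_space :: "real \<Rightarrow> 'a::real_normed_vector itself \<Rightarrow> bool" where
  "eps_smooth_space \<epsilon> (_::'a itself) \<longleftrightarrow> (\<forall>z::'a. norm z = 1 \<longrightarrow> eps_smooth_point \<epsilon> z)"

text \<open>S(W): supremum over norm-one functionals psi on W of diam {w in S_W. psi w = 1};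
  taken in the extended reals so that the supremum over an empty index set is -infinity.\<close>
definition calS :: "'w::real_normed_vector itself \<Rightarrow> ereal" where
  "calS (_::'w itself) =
     (SUP \<psi> \<in> {\<psi> :: 'w \<Rightarrow>\<^sub>L real. norm \<psi> = 1}.
        ereal (diameter {w::'w. norm w = 1 \<and> blinfun_apply \<psi> w = 1}))"

definition reflexive_space :: "'a::real_normed_vector itself \<Rightarrow> bool" where
  "reflexive_space (_::'a itself) \<longleftrightarrow>
     (\<forall>\<Psi> :: ('a \<Rightarrow>\<^sub>L real) \<Rightarrow>\<^sub>L real. \<exists>x::'a. \<forall>\<phi>. blinfun_apply \<Psi> \<phi> = blinfun_apply \<phi> x)"

end

theory Submission
  imports Defs
begin

text \<open>In a reflexive space every bounded functional on \<open>X*\<close> is the evaluation at some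
  \<open>z \<in> X\<close>, and by Hahn-Banach this evaluation has norm \<open>\<parallel>z\<parallel>\<close>. So the norm-one functionals
  on \<open>X*\<close> are exactly the evaluations at points of \<open>S_X\<close>, and the face of \<open>B_X*\<close> exposed by
  the evaluation at \<open>z\<close> is \<open>J(z)\<close>. Hence \<open>S(X*)\<close> is the supremum of \<open>diam J(z)\<close> over
  \<open>z \<in> S_X\<close>, which gives the equivalence for every real \<open>\<epsilon>\<close>.\<close>

text \<open>A linear functional on a subspace of \<open>X\<close> dominated by the norm, encoded by its graph in
  \<open>X \<times> \<real>\<close>; domination forces such a subspace to be the graph of a function.\<close>
definition norm_dominated_graph :: "('a::real_normed_vector \<times> real) set \<Rightarrow> bool" where
  "norm_dominated_graph G \<longleftrightarrow> subspace G \<and> (\<forall>(v, b) \<in> G. b \<le> norm v)"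

lemma norm_dominated_graphD:
  assumes "norm_dominated_graph G" and "(v, b) \<in> G"
  shows "b \<le> norm v"
  using assms unfolding norm_dominated_graph_def by auto

lemma norm_dominated_graph_unique:
  assumes G: "norm_dominated_graph G" and "(u, a) \<in> G" and "(u, b) \<in> G"
  shows "a = b"
proof -
  have "subspace G" using G unfolding norm_dominated_graph_def by simp
  then have "(0, a - b) \<in> G" and "(0, b - a) \<in> G"
    using subspace_diff assms(2,3) by fastforce+
  then have "a - b \<le> 0" and "b - a \<le> 0"
    using norm_dominated_graphD[OF G] by fastforce+
  then show ?thesis by simp
qed

lemma subspace_Union_chain:
  fixes \<C> :: "'a::real_vector set set"
  assumes "\<C> \<noteq> {}" and "\<And>S. S \<in> \<C> \<Longrightarrow> subspace S"
    and chain: "\<And>S T. S \<in> \<C> \<Longrightarrow> T \<in> \<C> \<Longrightarrow> S \<subseteq> T \<or> T \<subseteq> S"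
  shows "subspace (\<Union>\<C>)"
  unfolding subspace_def
proof (intro conjI ballI allI)
  show "0 \<in> \<Union>\<C>" using assms(1,2) subspace_0 by blast
next
  fix x y assume "x \<in> \<Union>\<C>" "y \<in> \<Union>\<C>"
  then obtain S T where "S \<in> \<C>" "x \<in> S" "T \<in> \<C>" "y \<in> T" by blast
  with chain[of S T] assms(2) show "x + y \<in> \<Union>\<C>"
    by (metis UnionI subsetD subspace_add)
next
  fix c x assume "x \<in> \<Union>\<C>"
  then show "c *\<^sub>R x \<in> \<Union>\<C>" using assms(2) subspace_scale by blast
qed

text \<open>The admissible values at \<open>u\<close> in the one-step extension of Hahn-Banach; the two bounds
  are compatible by the triangle inequality.\<close>
lemma norm_dominated_graph_extension_bounds:
  assumes G: "norm_dominated_graph G"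
  obtains c where "\<And>w b. (w, b) \<in> G \<Longrightarrow> b - norm (w - u) \<le> c"
    and "\<And>w b. (w, b) \<in> G \<Longrightarrow> c \<le> norm (w + u) - b"
proof
  have add: "(w + w', b + b') \<in> G" if "(w, b) \<in> G" "(w', b') \<in> G" for w b w' b'
    using G that unfolding norm_dominated_graph_def by (metis add_Pair subspace_add)
  have gap: "b - norm (w - u) \<le> norm (w' + u) - b'"
    if "(w, b) \<in> G" "(w', b') \<in> G" for w b w' b'
  proof -
    have "b + b' \<le> norm ((w - u) + (w' + u))"
      using norm_dominated_graphD[OF G add[OF that]] by simp
    also have "\<dots> \<le> norm (w - u) + norm (w' + u)" by (rule norm_triangle_ineq)
    finally show ?thesis by simp
  qed
  define T where "T = {b - norm (w - u) | w b. (w, b) \<in> G}"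
  have "(0, 0) \<in> G"
    using G unfolding norm_dominated_graph_def by (metis subspace_0 zero_prod_def)
  then have "T \<noteq> {}" and "bdd_above T"
    unfolding T_def bdd_above_def using gap by force+
  show "b - norm (w - u) \<le> Sup T" if "(w, b) \<in> G" for w b
    using that \<open>bdd_above T\<close> unfolding T_def by (blast intro: cSup_upper)
  show "Sup T \<le> norm (w + u) - b" if "(w, b) \<in> G" for w b
    using that \<open>T \<noteq> {}\<close> gap unfolding T_def by (blast intro: cSup_least)
qed

lemma norm_dominated_graph_extend:
  assumes G: "norm_dominated_graph G"
  obtains c where "norm_dominated_graph (span (insert (u, c) G))"
proof -
  obtain c where lower: "\<And>w b. (w, b) \<in> G \<Longrightarrow> b - norm (w - u) \<le> c"
    and upper: "\<And>w b. (w, b) \<in> G \<Longrightarrow> c \<le> norm (w + u) - b"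
    using norm_dominated_graph_extension_bounds[OF G] by blast
  have scaled: "(t *\<^sub>R v, t * b) \<in> G" if "(v, b) \<in> G" for t v b
    using G subspace_scale[OF _ that, of t] unfolding norm_dominated_graph_def by simp
  have dominated: "b + k * c \<le> norm (v + k *\<^sub>R u)" if vb: "(v, b) \<in> G" for v b k
  proof (cases k "0 :: real" rule: linorder_cases)
    case less
    have "(1 / - k) *\<^sub>R v - u = (1 / - k) *\<^sub>R (v + k *\<^sub>R u)"
      using less by (simp add: scaleR_add_right)
    then have "(b - norm (v + k *\<^sub>R u)) / - k \<le> c"
      using lower[OF scaled[OF vb, of "1 / - k"]] less by (simp add: diff_divide_distrib)
    with less show ?thesis by (simp add: field_simps)
  next
    case equal
    then show ?thesis using norm_dominated_graphD[OF G vb] by simp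
  next
    case greater
    have "(1 / k) *\<^sub>R v + u = (1 / k) *\<^sub>R (v + k *\<^sub>R u)"
      using greater by (simp add: scaleR_add_right)
    then have "c \<le> (norm (v + k *\<^sub>R u) - b) / k"
      using upper[OF scaled[OF vb, of "1 / k"]] greater by (simp add: diff_divide_distrib)
    with greater show ?thesis by (simp add: field_simps)
  qed
  have "snd q \<le> norm (fst q)" if "q \<in> span (insert (u, c) G)" for q
  proof -
    have "span G = G" using G span_eq_iff unfolding norm_dominated_graph_def by blast
    then have "\<exists>k. q - k *\<^sub>R (u, c) \<in> G" using that unfolding span_insert by (simp del: span_eq_iff)
    then obtain k where "q - k *\<^sub>R (u, c) \<in> G" ..
    moreover obtain v b where vb: "q - k *\<^sub>R (u, c) = (v, b)" by fastforce
    moreover have "q = (v, b) + k *\<^sub>R (u, c)" using vb by (metis diff_add_cancel)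
    ultimately have "(v, b) \<in> G" and "q = (v + k *\<^sub>R u, b + k * c)" by simp_all
    then show ?thesis using dominated by simp
  qed
  then have "norm_dominated_graph (span (insert (u, c) G))"
    unfolding norm_dominated_graph_def by (auto simp: subspace_span)
  then show ?thesis by (rule that)
qed

lemma norm_dominated_graph_total_extension:
  assumes G: "norm_dominated_graph G"
  obtains M where "G \<subseteq> M" and "norm_dominated_graph M" and "\<And>u. \<exists>a. (u, a) \<in> M"
proof -
  let ?A = "{M. norm_dominated_graph M \<and> G \<subseteq> M}"
  have chain: "\<Union>\<C> \<in> ?A" if "\<C> \<noteq> {}" and "subset.chain ?A \<C>" for \<C>
  proof -
    have \<C>: "\<And>M. M \<in> \<C> \<Longrightarrow> norm_dominated_graph M \<and> G \<subseteq> M"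
      "\<And>M N. M \<in> \<C> \<Longrightarrow> N \<in> \<C> \<Longrightarrow> M \<subseteq> N \<or> N \<subseteq> M"
      using that(2) unfolding subset.chain_def by blast+
    then have "subspace (\<Union>\<C>)"
      using subspace_Union_chain[OF that(1)] unfolding norm_dominated_graph_def by blast
    with \<C>(1) that(1) show ?thesis unfolding norm_dominated_graph_def by blast
  qed
  have "?A \<noteq> {}" using G by blast
  then have "\<exists>M\<in>?A. \<forall>N\<in>?A. M \<subseteq> N \<longrightarrow> N = M"
    using chain by (rule subset_Zorn_nonempty)
  then obtain M where MA: "M \<in> ?A" and maximal: "\<forall>N\<in>?A. M \<subseteq> N \<longrightarrow> N = M" ..
  have "\<exists>a. (u, a) \<in> M" for u
  proof -
    obtain c where c: "norm_dominated_graph (span (insert (u, c) M))"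
      using norm_dominated_graph_extend MA by blast
    have "M \<subseteq> span (insert (u, c) M)" by (meson span_superset subset_insertI order_trans)
    with c MA maximal have "span (insert (u, c) M) = M" by blast
    then show ?thesis by (metis insertI1 span_superset subsetD)
  qed
  with MA that show ?thesis by blast
qed

lemma norm_dominated_graph_total_blinfun:
  assumes M: "norm_dominated_graph M" and total: "\<And>u. \<exists>a. (u, a) \<in> M"
  obtains \<phi> :: "'a::real_normed_vector \<Rightarrow>\<^sub>L real" where "norm \<phi> \<le> 1" and "\<And>u. (u, blinfun_apply \<phi> u) \<in> M"
proof -
  define f where "f u = (SOME a. (u, a) \<in> M)" for u
  have fM: "(u, f u) \<in> M" for u unfolding f_def using total by (rule someI_ex)
  have "subspace M" using M unfolding norm_dominated_graph_def by simp
  then have "(u + v, f u + f v) \<in> M" and "(r *\<^sub>R u, r * f u) \<in> M" for u v r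
    using subspace_add[OF _ fM fM] subspace_scale[OF _ fM] by fastforce+
  then have add: "f (u + v) = f u + f v" and scale: "f (r *\<^sub>R u) = r *\<^sub>R f u" for u v r
    using norm_dominated_graph_unique[OF M fM] by auto
  have le: "f u \<le> norm u" for u using norm_dominated_graphD[OF M fM] .
  have bound: "norm (f u) \<le> norm u * 1" for u
    using le[of u] le[of "- u"] scale[of "- 1" u] by simp
  have "bounded_linear f" by (rule bounded_linear_intro[OF add scale bound])
  then have "norm (Blinfun f) \<le> 1" and "blinfun_apply (Blinfun f) = f"
    using bound by (auto intro: norm_blinfun_bound simp: bounded_linear_Blinfun_apply)
  with fM that show ?thesis by metis
qed

theorem norm_dominated_graph_Hahn_Banach:
  assumes G: "norm_dominated_graph G"
  obtains \<phi> :: "'a::real_normed_vector \<Rightarrow>\<^sub>L real"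
  where "norm \<phi> \<le> 1" and "\<And>v b. (v, b) \<in> G \<Longrightarrow> blinfun_apply \<phi> v = b"
proof -
  obtain M where "G \<subseteq> M" and M: "norm_dominated_graph M" and total: "\<And>u. \<exists>a. (u, a) \<in> M"
    using norm_dominated_graph_total_extension[OF G] by blast
  obtain \<phi> where "norm \<phi> \<le> 1" and \<phi>M: "\<And>u. (u, blinfun_apply \<phi> u) \<in> M"
    using norm_dominated_graph_total_blinfun[OF M total] by blast
  have "blinfun_apply \<phi> v = b" if "(v, b) \<in> G" for v b
    using norm_dominated_graph_unique[OF M \<phi>M] \<open>G \<subseteq> M\<close> that by blast
  with \<open>norm \<phi> \<le> 1\<close> show ?thesis by (rule that)
qed

lemma exists_norming_blinfun:
  fixes x :: "'a::real_normed_vector"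
  obtains \<phi> :: "'a \<Rightarrow>\<^sub>L real" where "norm \<phi> \<le> 1" and "blinfun_apply \<phi> x = norm x"
proof -
  have "k * norm x \<le> norm (k *\<^sub>R x)" for k
    by (simp add: mult_right_mono)
  then have "norm_dominated_graph (span {(x, norm x)})"
    unfolding norm_dominated_graph_def by (simp add: subspace_span) (auto simp: span_singleton)
  then show ?thesis
    using norm_dominated_graph_Hahn_Banach span_base that by (metis singletonI)
qed

text \<open>\<open>blinfun.prod_left z\<close> is the evaluation \<open>\<phi> \<mapsto> \<phi> z\<close>, the canonical image of \<open>z\<close> in \<open>X**\<close>.\<close>
lemma norm_blinfun_prod_left:
  fixes z :: "'a::real_normed_vector"
  shows "norm (blinfun.prod_left z :: ('a \<Rightarrow>\<^sub>L real) \<Rightarrow>\<^sub>L real) = norm z"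
proof (rule antisym)
  show "norm (blinfun.prod_left z :: ('a \<Rightarrow>\<^sub>L real) \<Rightarrow>\<^sub>L real) \<le> norm z"
    by (rule norm_blinfun_bound) (simp_all, metis mult.commute norm_blinfun real_norm_def)
  obtain \<phi> :: "'a \<Rightarrow>\<^sub>L real" where "norm \<phi> \<le> 1" and "blinfun_apply \<phi> z = norm z"
    by (rule exists_norming_blinfun)
  then have "norm z \<le> norm (blinfun.prod_left z :: ('a \<Rightarrow>\<^sub>L real) \<Rightarrow>\<^sub>L real) * norm \<phi>"
    using norm_blinfun[of "blinfun.prod_left z" \<phi>] by simp
  also have "\<dots> \<le> norm (blinfun.prod_left z :: ('a \<Rightarrow>\<^sub>L real) \<Rightarrow>\<^sub>L real)"
    using \<open>norm \<phi> \<le> 1\<close> by (simp add: mult_left_le)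
  finally show "norm z \<le> norm (blinfun.prod_left z :: ('a \<Rightarrow>\<^sub>L real) \<Rightarrow>\<^sub>L real)" .
qed

lemma reflexive_space_bidual_unit_sphere:
  assumes "reflexive_space TYPE('a::real_normed_vector)"
  shows "{\<psi> :: ('a \<Rightarrow>\<^sub>L real) \<Rightarrow>\<^sub>L real. norm \<psi> = 1} = blinfun.prod_left ` {z :: 'a. norm z = 1}"
proof
  show "{\<psi> :: ('a \<Rightarrow>\<^sub>L real) \<Rightarrow>\<^sub>L real. norm \<psi> = 1} \<subseteq> blinfun.prod_left ` {z. norm z = 1}"
  proof
    fix \<psi> :: "('a \<Rightarrow>\<^sub>L real) \<Rightarrow>\<^sub>L real" assume "\<psi> \<in> {\<psi>. norm \<psi> = 1}"
    moreover obtain z where "\<psi> = blinfun.prod_left z"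
      using assms unfolding reflexive_space_def by (metis blinfun.prod_left.rep_eq blinfun_eqI)
    ultimately show "\<psi> \<in> blinfun.prod_left ` {z. norm z = 1}"
      by (simp add: norm_blinfun_prod_left)
  qed
qed (auto simp: norm_blinfun_prod_left)

lemma calS_dual_reflexive:
  assumes "reflexive_space TYPE('a::real_normed_vector)"
  shows "calS TYPE('a \<Rightarrow>\<^sub>L real) = (SUP z \<in> {z :: 'a. norm z = 1}. ereal (diameter (duality_set z)))"
proof -
  have "{\<phi>. norm \<phi> = 1 \<and> blinfun_apply (blinfun.prod_left z) \<phi> = 1} = duality_set z"
    if "z \<in> {z. norm z = 1}" for z :: 'a
    using that unfolding duality_set_def by auto
  then show ?thesis
    unfolding calS_def reflexive_space_bidual_unit_sphere[OF assms] image_image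
    by (intro SUP_cong refl) simp
qed

theorem theorem2p5:
  fixes \<epsilon> :: real
  assumes "reflexive_space TYPE('a::banach)"
    and "0 \<le> \<epsilon>" and "\<epsilon> < 2"
  shows "eps_smooth_space \<epsilon> TYPE('a) \<longleftrightarrow> calS TYPE('a \<Rightarrow>\<^sub>L real) \<le> ereal \<epsilon>"
  unfolding calS_dual_reflexive[OF assms(1)] eps_smooth_space_def eps_smooth_point_def
  by (simp add: SUP_le_iff)

end
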